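(* Let $(\gamma_n)$ be a sequence of positive reals satisfying conditions (C1)–(C7) below, let $\omega>0$ be fixed, and let $a_n,b_n$ be defined as below. Then $\operatorname{Im}(a_n)>|b_n|$ for all sufficiently large $n$.
   Context: Let $\Delta_n=\gamma_{n+1}-\gamma_n$, $\Delta^2_n=\Delta_{n+1}-\Delta_n$. Conditions: (C1) $\gamma_n\to\infty$; (C2) $\Delta_n\to0$; (C3) there exist $n_0,m_0$ with $\gamma_{n+m}>\gamma_n$ for all $n\ge n_0$, $m\ge m_0$; (C4) $\sum 1/\gamma_j=\infty$; (C5) some $\kappa>1$ has $\sum\gamma_j^{-\kappa}<\infty$; (C6) $\sum|\Delta_n|/\gamma_n^2<\infty$; (C7) $\sum|\Delta^2_n|/\gamma_n<\infty$. For $n\ge1$, $a_n=-\frac{\omega^2}{2\gamma_{2n-1}\gamma_{2n}}+\frac{\gamma_{2n-1}}{2\gamma_{2n}}+\frac{\gamma_{2n-2}}{2\gamma_{2n-1}}+i\left(\frac{\omega}{2\gamma_{2n-1}}+\frac{\omega\gamma_{2n-2}}{2\gamma_{2n-1}\gamma_{2n}}\right)$, $b_n=\frac{\omega^2}{2\gamma_{2n-1}\gamma_{2n}}-\frac{\gamma_{2n-1}}{2\gamma_{2n}}+\frac{\gamma_{2n-2}}{2\gamma_{2n-1}}+i\left(-\frac{\omega}{2\gamma_{2n-1}}+\frac{\omega\gamma_{2n-2}}{2\gamma_{2n-1}\gamma_{2n}}\right)$. *)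

theory Defs
  imports Complex_Main
begin

definition Delta :: "(nat \<Rightarrow> real) \<Rightarrow> nat \<Rightarrow> real" where
  "Delta \<gamma> n = \<gamma> (Suc n) - \<gamma> n"

definition Delta2 :: "(nat \<Rightarrow> real) \<Rightarrow> nat \<Rightarrow> real" where
  "Delta2 \<gamma> n = Delta \<gamma> (Suc n) - Delta \<gamma> n"

definition a_seq :: "(nat \<Rightarrow> real) \<Rightarrow> real \<Rightarrow> nat \<Rightarrow> complex" where
  "a_seq \<gamma> \<omega> n =
     Complex
       (- (\<omega>^2) / (2 * \<gamma> (2*n-1) * \<gamma> (2*n)) + \<gamma> (2*n-1) / (2 * \<gamma> (2*n))
          + \<gamma> (2*n-2) / (2 * \<gamma> (2*n-1)))
       (\<omega> / (2 * \<gamma> (2*n-1)) + \<omega> * \<gamma> (2*n-2) / (2 * \<gamma> (2*n-1) * \<gamma> (2*n)))"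

definition b_seq :: "(nat \<Rightarrow> real) \<Rightarrow> real \<Rightarrow> nat \<Rightarrow> complex" where
  "b_seq \<gamma> \<omega> n =
     Complex
       ((\<omega>^2) / (2 * \<gamma> (2*n-1) * \<gamma> (2*n)) - \<gamma> (2*n-1) / (2 * \<gamma> (2*n))
          + \<gamma> (2*n-2) / (2 * \<gamma> (2*n-1)))
       (- \<omega> / (2 * \<gamma> (2*n-1)) + \<omega> * \<gamma> (2*n-2) / (2 * \<gamma> (2*n-1) * \<gamma> (2*n)))"

end

theory Submission
  imports Defs
begin

text \<open>Put \<open>x = \<gamma>(2n-1)\<close>, \<open>y = \<gamma>(2n)\<close>, \<open>z = \<gamma>(2n-2)\<close>. Over the common denominator \<open>2xy\<close>,
  \<open>Im a\<^sub>n = \<omega>(y+z)\<close> and \<open>b\<^sub>n = (\<omega>\<^sup>2 - x\<^sup>2 + yz) + i\<omega>(z-y)\<close>, so \<open>Im a\<^sub>n > |b\<^sub>n|\<close> amounts to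
  \<open>(\<omega>\<^sup>2 - x\<^sup>2 + yz)\<^sup>2 < 4\<omega>\<^sup>2yz\<close>. By (C2) the gaps \<open>y - x\<close>, \<open>x - z\<close> are eventually at most \<open>\<omega>/2\<close>,
  which makes \<open>yz - x\<^sup>2 = O(\<omega>x)\<close>; by (C1) \<open>x\<close> eventually dominates \<open>\<omega>\<close>, and then
  \<open>|\<omega>\<^sup>2 - x\<^sup>2 + yz| < 2\<omega>(x - \<omega>/2) \<le> 2\<omega> min y z \<le> 2\<omega>\<surd>(yz)\<close>.\<close>

lemma near_square_product_bound:
  fixes x y z w :: real
  assumes w: "w > 0" and y: "y > 0" and z: "z > 0"
    and yx: "\<bar>y - x\<bar> \<le> w/2" and xz: "\<bar>x - z\<bar> \<le> w/2" and big: "x > 3*w"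
  shows "(w^2 - x^2 + y*z)^2 < 4*w^2*(y*z)"
proof -
  define m where "m = min y z"
  have m_lower: "x - w/2 \<le> m"
    using yx xz unfolding m_def abs_le_iff by linarith
  have m_sq: "m*m \<le> y*z"
    unfolding m_def by (smt (verit) mult_mono y z)
  have "\<bar>y*z - x^2\<bar> = \<bar>x*((y-x) - (x-z)) - (y-x)*(x-z)\<bar>"
    by (simp add: algebra_simps power2_eq_square)
  also have "\<dots> \<le> x*w + (w/2)*(w/2)"
  proof -
    have "\<bar>(y-x) - (x-z)\<bar> \<le> w"
      using yx xz by linarith
    then have "\<bar>x*((y-x) - (x-z))\<bar> \<le> x*w"
      using big w by (simp add: abs_mult mult_left_mono)
    moreover have "\<bar>(y-x)*(x-z)\<bar> \<le> (w/2)*(w/2)"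
      unfolding abs_mult using yx xz w by (intro mult_mono) auto
    ultimately show ?thesis by linarith
  qed
  finally have "\<bar>w^2 - x^2 + y*z\<bar> \<le> w^2 + x*w + w*w/4"
    using abs_triangle_ineq[of "w^2" "y*z - x^2"] w by simp
  also have "\<dots> < 2*w*(x - w/2)"
    using mult_strict_left_mono[OF big w] w by (simp add: power2_eq_square algebra_simps)
  also have "\<dots> \<le> 2*w*m"
    using m_lower w by simp
  finally have "(w^2 - x^2 + y*z)^2 < (2*w*m)^2"
    by (metis abs_ge_zero power2_abs power_strict_mono pos2)
  also have "\<dots> \<le> 4*w^2*(y*z)"
    using m_sq w by (simp add: power2_eq_square)
  finally show ?thesis .
qed

lemma cmod_Complex_less:
  assumes "u^2 + v^2 < t^2" and "t \<ge> 0"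
  shows "cmod (Complex u v) < t"
  using assms by (simp add: cmod_def real_sqrt_less_iff real_less_lsqrt)

lemma Im_a_seq_eq:
  assumes "\<gamma> (2*n-1) > 0" and "\<gamma> (2*n) > 0"
  shows "Im (a_seq \<gamma> \<omega> n)
    = \<omega> * (\<gamma> (2*n) + \<gamma> (2*n-2)) / (2 * \<gamma> (2*n-1) * \<gamma> (2*n))"
  using assms by (simp add: a_seq_def field_simps)

lemma b_seq_eq:
  assumes "\<gamma> (2*n-1) > 0" and "\<gamma> (2*n) > 0"
  shows "b_seq \<gamma> \<omega> n = Complex
      ((\<omega>^2 - \<gamma> (2*n-1)^2 + \<gamma> (2*n) * \<gamma> (2*n-2)) / (2 * \<gamma> (2*n-1) * \<gamma> (2*n)))
      (\<omega> * (\<gamma> (2*n-2) - \<gamma> (2*n)) / (2 * \<gamma> (2*n-1) * \<gamma> (2*n)))"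
  using assms by (simp add: b_seq_def field_simps power2_eq_square)

lemma cmod_gap_quotient_less:
  fixes x y z w :: real
  assumes w: "w > 0" and x: "x > 0" and y: "y > 0" and z: "z > 0"
    and yx: "\<bar>y - x\<bar> \<le> w/2" and xz: "\<bar>x - z\<bar> \<le> w/2" and big: "x > 3*w"
  shows "cmod (Complex ((w^2 - x^2 + y*z)/(2*x*y)) (w*(z-y)/(2*x*y))) < w*(y+z)/(2*x*y)"
proof (rule cmod_Complex_less)
  have D: "(2*x*y)^2 > 0" using x y by simp
  have "(w^2 - x^2 + y*z)^2 + (w*(z-y))^2 < (w*(y+z))^2"
    using near_square_product_bound[OF w y z yx xz big] by (simp add: power2_eq_square algebra_simps)
  then show "((w^2 - x^2 + y*z)/(2*x*y))^2 + (w*(z-y)/(2*x*y))^2 < (w*(y+z)/(2*x*y))^2"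
    unfolding power_divide add_divide_distrib[symmetric] using D by (rule divide_strict_right_mono)
  show "0 \<le> w*(y+z)/(2*x*y)" using w x y z by simp
qed

lemma Im_a_seq_gt_cmod_b_seq:
  assumes pos: "\<And>k. \<gamma> k > 0" and w: "\<omega> > 0"
    and gap_hi: "\<bar>\<gamma> (2*n) - \<gamma> (2*n-1)\<bar> \<le> \<omega>/2"
    and gap_lo: "\<bar>\<gamma> (2*n-1) - \<gamma> (2*n-2)\<bar> \<le> \<omega>/2"
    and big: "\<gamma> (2*n-1) > 3*\<omega>"
  shows "Im (a_seq \<gamma> \<omega> n) > cmod (b_seq \<gamma> \<omega> n)"
  using cmod_gap_quotient_less[OF w pos pos pos gap_hi gap_lo big]
  by (simp only: Im_a_seq_eq b_seq_eq pos mult.commute[of "\<gamma> (2*n)" "\<gamma> (2*n-2)"])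

lemma eventually_small_gaps_and_large:
  assumes "filterlim \<gamma> at_top sequentially" and "Delta \<gamma> \<longlonglongrightarrow> 0" and "\<epsilon> > 0"
  shows "\<forall>\<^sub>F k in sequentially. \<bar>\<gamma> (Suc k) - \<gamma> k\<bar> \<le> \<epsilon> \<and> \<gamma> k > c"
proof -
  have "\<forall>\<^sub>F k in sequentially. \<bar>Delta \<gamma> k\<bar> < \<epsilon>"
    using tendstoD[OF assms(2) assms(3)] by (simp add: dist_real_def)
  moreover have "\<forall>\<^sub>F k in sequentially. \<gamma> k > c"
    using assms(1) by (simp add: filterlim_at_top_dense)
  ultimately show ?thesis
    by eventually_elim (simp add: Delta_def)
qed

theorem corollary9:
  fixes \<gamma> :: "nat \<Rightarrow> real" and \<omega> :: real
  assumes pos: "\<And>n. \<gamma> n > 0"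
    and C1: "filterlim \<gamma> at_top sequentially"
    and C2: "Delta \<gamma> \<longlonglongrightarrow> 0"
    and C3: "\<exists>n0 m0. \<forall>n\<ge>n0. \<forall>m\<ge>m0. \<gamma> (n + m) > \<gamma> n"
    and C4: "\<not> summable (\<lambda>j. 1 / \<gamma> j)"
    and C5: "\<exists>\<kappa>>1. summable (\<lambda>j. \<gamma> j powr (- \<kappa>))"
    and C6: "summable (\<lambda>n. \<bar>Delta \<gamma> n\<bar> / \<gamma> n ^ 2)"
    and C7: "summable (\<lambda>n. \<bar>Delta2 \<gamma> n\<bar> / \<gamma> n)"
    and om: "\<omega> > 0"
  shows "\<forall>\<^sub>F n in sequentially. Im (a_seq \<gamma> \<omega> n) > cmod (b_seq \<gamma> \<omega> n)"
proof -
  obtain N where N: "\<And>k. k \<ge> N \<Longrightarrow> \<bar>\<gamma> (Suc k) - \<gamma> k\<bar> \<le> \<omega>/2 \<and> \<gamma> k > 3*\<omega>"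
    using eventually_small_gaps_and_large[OF C1 C2, of "\<omega>/2" "3*\<omega>"] om
    by (auto simp: eventually_sequentially)
  show ?thesis
    unfolding eventually_sequentially
  proof (intro exI allI impI)
    fix n assume n: "n \<ge> N + 1"
    have "Suc (2*n-2) = 2*n-1" and "Suc (2*n-1) = 2*n" and "2*n-2 \<ge> N" using n by auto
    then have "\<bar>\<gamma> (2*n) - \<gamma> (2*n-1)\<bar> \<le> \<omega>/2" and "\<bar>\<gamma> (2*n-1) - \<gamma> (2*n-2)\<bar> \<le> \<omega>/2"
      and "\<gamma> (2*n-1) > 3*\<omega>"
      using N[of "2*n-1"] N[of "2*n-2"] by (auto simp: abs_minus_commute)
    then show "Im (a_seq \<gamma> \<omega> n) > cmod (b_seq \<gamma> \<omega> n)"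
      by (rule Im_a_seq_gt_cmod_b_seq[OF pos om])
  qed
qed

end
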